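(* Let $P_i$ denote the Legendre polynomials and $L_i=\sqrt{\tfrac{2}{2i+1}}\,P_i$. There does not exist a family $\{\Delta_n\}_{n=0}^{\infty}$ of functions on $(-1,1)$ such that each $\Delta_n$ is continuous on $(-1,1)$, each $\Delta_n$ is equal at every point of $(-1,1)$ to the sum of its Fourier–Legendre series $\sum_{i=0}^{\infty}\alpha_i^n L_i(x)$ with $\alpha_i^n=\int_{-1}^{1}\Delta_n(x)L_i(x)\,dx$, and \[ \int_{-1}^{1} x^{k}\,\Delta_n(x)\,dx=\delta_{k,n}\qquad\text{for all }k,n\in\mathbb{N}_0 . \]
   Context: $\delta_{k,n}$ is the Kronecker delta. The functions $\Delta_n$ in the claim are called "delta functions" for the raw-moment functionals $f\mapsto\int_{-1}^{1}x^k f(x)\,dx$. *)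

theory Defs
  imports "HOL-Analysis.Analysis"
begin

fun legendreP :: "nat \<Rightarrow> real \<Rightarrow> real" where
  "legendreP 0 x = 1"
| "legendreP (Suc 0) x = x"
| "legendreP (Suc (Suc n)) x =
     ((2 * real n + 3) * x * legendreP (Suc n) x - (real n + 1) * legendreP n x) / (real n + 2)"

definition legendreL :: "nat \<Rightarrow> real \<Rightarrow> real" where
  "legendreL i x = sqrt (2 / (2 * real i + 1)) * legendreP i x"

end

theory Submission
  imports Defs "HOL-Computational_Algebra.Polynomial"
begin

text \<open>Already the functional of the second moment has no delta function. If \<open>\<Delta>\<close> is
  one, then \<open>\<integral> \<Delta> p = coeff p 2\<close> for every polynomial \<open>p\<close>, so the Fourier--Legendre
  series of \<open>\<Delta>\<close> at \<open>x = 0\<close> has the terms \<open>2/(2i+1) c\<^sub>2(P\<^sub>i) c\<^sub>0(P\<^sub>i)\<close>. Bonnet's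
  recurrence gives \<open>c\<^sub>2(P\<^sub>2\<^sub>m) = -m(2m+1) c\<^sub>0(P\<^sub>2\<^sub>m)\<close> and \<open>c\<^sub>0(P\<^sub>2\<^sub>m)\<^sup>2 \<ge> 1/(4m+1)\<close>,
  so these terms have modulus at least \<open>1/5\<close> for \<open>i = 2m > 0\<close> and the series diverges.\<close>

fun legendre_poly :: "nat \<Rightarrow> real poly" where
  "legendre_poly 0 = 1"
| "legendre_poly (Suc 0) = [:0, 1:]"
| "legendre_poly (Suc (Suc n)) = smult (1 / (real n + 2))
     (smult (2 * real n + 3) (pCons 0 (legendre_poly (Suc n))) - smult (real n + 1) (legendre_poly n))"

lemma poly_legendre_poly: "poly (legendre_poly n) x = legendreP n x"
  by (induction n rule: legendre_poly.induct) (auto simp: field_simps)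

lemma legendreL_eq_poly:
  "legendreL n x = sqrt (2 / (2 * real n + 1)) * poly (legendre_poly n) x"
  by (simp add: legendreL_def poly_legendre_poly)

lemma coeff_legendre_poly_Suc_Suc_0:
  "coeff (legendre_poly (Suc (Suc n))) 0 = - (real n + 1) / (real n + 2) * coeff (legendre_poly n) 0"
  by (simp add: field_simps)

lemma coeff_legendre_poly_Suc_Suc_Suc:
  "coeff (legendre_poly (Suc (Suc n))) (Suc k) =
     ((2 * real n + 3) * coeff (legendre_poly (Suc n)) k
       - (real n + 1) * coeff (legendre_poly n) (Suc k)) / (real n + 2)"
  by (simp add: field_simps)

lemma coeff_legendre_poly_even_0_Suc:
  "coeff (legendre_poly (2 * Suc m)) 0
     = - (2 * real m + 1) / (2 * real m + 2) * coeff (legendre_poly (2 * m)) 0"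
  using coeff_legendre_poly_Suc_Suc_0[of "2 * m"] by (simp add: field_simps)

lemma coeff_legendre_poly_even_Suc:
  "coeff (legendre_poly (2 * Suc m)) (Suc k) =
     ((4 * real m + 3) * coeff (legendre_poly (2 * m + 1)) k
       - (2 * real m + 1) * coeff (legendre_poly (2 * m)) (Suc k)) / (2 * real m + 2)"
  using coeff_legendre_poly_Suc_Suc_Suc[of "2 * m" k] by (simp add: algebra_simps)

lemma coeff_legendre_poly_odd_Suc:
  "coeff (legendre_poly (2 * Suc m + 1)) (Suc k) =
     ((4 * real m + 5) * coeff (legendre_poly (2 * Suc m)) k
       - (2 * real m + 2) * coeff (legendre_poly (2 * m + 1)) (Suc k)) / (2 * real m + 3)"
  using coeff_legendre_poly_Suc_Suc_Suc[of "2 * m + 1" k] by (simp add: algebra_simps)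

lemma coeff_legendre_poly_odd_1:
  "coeff (legendre_poly (2 * m + 1)) 1 = (2 * real m + 1) * coeff (legendre_poly (2 * m)) 0"
proof (induction m)
  case (Suc m)
  let ?c = "coeff (legendre_poly (2 * m)) 0"
  have "coeff (legendre_poly (2 * Suc m + 1)) 1
      = ((4 * real m + 5) * coeff (legendre_poly (2 * Suc m)) 0
          - (2 * real m + 2) * coeff (legendre_poly (2 * m + 1)) 1) / (2 * real m + 3)"
    using coeff_legendre_poly_odd_Suc[of m 0] by simp
  also have "\<dots> = ((4 * real m + 5) * (- (2 * real m + 1) / (2 * real m + 2) * ?c)
          - (2 * real m + 2) * ((2 * real m + 1) * ?c)) / (2 * real m + 3)"
    by (simp only: coeff_legendre_poly_even_0_Suc Suc.IH)
  also have "\<dots> = (2 * real (Suc m) + 1) * coeff (legendre_poly (2 * Suc m)) 0"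
    unfolding coeff_legendre_poly_even_0_Suc by (simp add: divide_simps) (simp add: algebra_simps)
  finally show ?case .
qed simp

lemma coeff_legendre_poly_even_2:
  "coeff (legendre_poly (2 * m)) 2 = - (real m * (2 * real m + 1)) * coeff (legendre_poly (2 * m)) 0"
proof (induction m)
  case (Suc m)
  let ?c = "coeff (legendre_poly (2 * m)) 0"
  have "coeff (legendre_poly (2 * Suc m)) 2
      = ((4 * real m + 3) * ((2 * real m + 1) * ?c)
          + (2 * real m + 1) * (real m * (2 * real m + 1) * ?c)) / (2 * real m + 2)"
    using coeff_legendre_poly_even_Suc[of m 1] Suc.IH coeff_legendre_poly_odd_1[of m]
    by (simp add: numeral_2_eq_2)
  also have "\<dots> = - (real (Suc m) * (2 * real (Suc m) + 1)) * coeff (legendre_poly (2 * Suc m)) 0"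
    unfolding coeff_legendre_poly_even_0_Suc by (simp add: field_simps)
  finally show ?case .
qed simp

text \<open>The exact value is \<open>binomial (2m) m ^ 2 / 16 ^ m\<close>; the bound survives induction
  because \<open>(2m+1)\<^sup>2 (4m+5) = (2m+2)\<^sup>2 (4m+1) + 1\<close>.\<close>
lemma coeff_legendre_poly_even_0_sq_ge:
  "(coeff (legendre_poly (2 * m)) 0)\<^sup>2 \<ge> 1 / (4 * real m + 1)"
proof (induction m)
  case (Suc m)
  let ?c = "coeff (legendre_poly (2 * m)) 0"
  have "1 / (4 * real (Suc m) + 1) \<le> ((2 * real m + 1) / (2 * real m + 2))\<^sup>2 * (1 / (4 * real m + 1))"
    by (simp add: divide_simps power2_eq_square) (simp add: algebra_simps)
  also have "\<dots> \<le> ((2 * real m + 1) / (2 * real m + 2))\<^sup>2 * ?c\<^sup>2"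
    using Suc.IH by (intro mult_left_mono) auto
  also have "\<dots> = (coeff (legendre_poly (2 * Suc m)) 0)\<^sup>2"
    unfolding coeff_legendre_poly_even_0_Suc by (simp only: power_mult_distrib power_divide power2_minus)
  finally show ?case .
qed simp

lemma legendre_center_term_ge:
  assumes "m \<ge> 1"
  shows "\<bar>2 / (2 * real (2 * m) + 1) * coeff (legendre_poly (2 * m)) 2
            * coeff (legendre_poly (2 * m)) 0\<bar> \<ge> 1 / 5"
proof -
  let ?c = "coeff (legendre_poly (2 * m)) 0"
  have m: "1 \<le> real m"
    using assms by simp
  have "1 \<le> 4 * (real m * real m) + 2 * real m"
    using mult_mono[OF m m] m by linarith
  then have "1 / 5 \<le> 2 * real m * (2 * real m + 1) / (4 * real m + 1) * (1 / (4 * real m + 1))"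
    by (simp add: divide_simps) (simp add: algebra_simps)
  also have "\<dots> \<le> 2 * real m * (2 * real m + 1) / (4 * real m + 1) * ?c\<^sup>2"
    using coeff_legendre_poly_even_0_sq_ge[of m] by (intro mult_left_mono) auto
  also have "\<dots> = \<bar>2 / (2 * real (2 * m) + 1) * coeff (legendre_poly (2 * m)) 2 * ?c\<bar>"
  proof -
    have "2 / (2 * real (2 * m) + 1) * coeff (legendre_poly (2 * m)) 2 * ?c
        = - (2 * real m * (2 * real m + 1) / (4 * real m + 1) * ?c\<^sup>2)"
      unfolding coeff_legendre_poly_even_2 by (simp add: power2_eq_square field_simps)
    then show ?thesis
      by (simp add: abs_mult)
  qed
  finally show ?thesis .
qed

lemma has_integral_mult_poly_moment_delta:
  fixes f :: "real \<Rightarrow> real"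
  assumes "\<And>k. ((\<lambda>x. x ^ k * f x) has_integral (if k = n then 1 else 0)) S"
  shows "((\<lambda>x. f x * poly p x) has_integral coeff p n) S"
proof -
  have "((\<lambda>x. \<Sum>k\<le>degree p. coeff p k * (x ^ k * f x)) has_integral
          (\<Sum>k\<le>degree p. coeff p k * (if k = n then 1 else 0))) S"
    using assms by (intro has_integral_sum has_integral_mult_right) auto
  moreover have "(\<Sum>k\<le>degree p. coeff p k * (if k = n then 1 else 0)) = coeff p n"
    by (cases "n \<le> degree p") (auto simp: if_distrib[of "\<lambda>x. _ * x"] coeff_eq_0 cong: if_cong)
  ultimately show ?thesis
    by (simp add: poly_altdef sum_distrib_left mult_ac)
qed

lemma no_delta_function_second_moment:
  fixes \<Delta> :: "real \<Rightarrow> real"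
  assumes series: "(\<lambda>i. integral {-1<..<1} (\<lambda>t. \<Delta> t * legendreL i t) * legendreL i 0) sums s"
    and moments: "\<And>k. ((\<lambda>x. x ^ k * \<Delta> x) has_integral (if k = 2 then 1 else 0)) {-1<..<1}"
  shows False
proof -
  have coefficient: "integral {-1<..<1} (\<lambda>t. \<Delta> t * legendreL i t)
      = sqrt (2 / (2 * real i + 1)) * coeff (legendre_poly i) 2" for i
    using has_integral_mult_poly_moment_delta[OF moments,
        of "smult (sqrt (2 / (2 * real i + 1))) (legendre_poly i)"]
    by (intro integral_unique) (simp add: legendreL_eq_poly mult_ac)
  define a where "a i = 2 / (2 * real i + 1) * coeff (legendre_poly i) 2 * coeff (legendre_poly i) 0"
    for i
  have "integral {-1<..<1} (\<lambda>t. \<Delta> t * legendreL i t) * legendreL i 0 = a i" for i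
    unfolding coefficient a_def by (simp add: legendreL_eq_poly poly_0_coeff_0 mult_ac)
  with series have "a sums s"
    by simp
  then have "a \<longlonglongrightarrow> 0"
    using summable_LIMSEQ_zero sums_summable by blast
  from LIMSEQ_D[OF this, of "1 / 5"] obtain N where "\<forall>i\<ge>N. \<bar>a i\<bar> < 1 / 5"
    by auto
  then have "\<bar>a (2 * (N + 1))\<bar> < 1 / 5"
    by simp
  with legendre_center_term_ge[of "N + 1"] show False
    unfolding a_def by simp
qed

theorem proposition1:
  shows "\<not> (\<exists>\<Delta> :: nat \<Rightarrow> real \<Rightarrow> real.
            (\<forall>n. continuous_on {-1<..<1} (\<Delta> n))
          \<and> (\<forall>n. \<forall>x\<in>{-1<..<1}.
                (\<lambda>i. integral {-1<..<1} (\<lambda>t. \<Delta> n t * legendreL i t) * legendreL i x)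
                  sums \<Delta> n x)
          \<and> (\<forall>k n. ((\<lambda>x. x ^ k * \<Delta> n x) has_integral (if k = n then 1 else 0)) {-1<..<1}))"
proof clarify
  fix \<Delta> :: "nat \<Rightarrow> real \<Rightarrow> real"
  assume "\<forall>n. \<forall>x\<in>{-1<..<1}.
            (\<lambda>i. integral {-1<..<1} (\<lambda>t. \<Delta> n t * legendreL i t) * legendreL i x) sums \<Delta> n x"
    and "\<forall>k n. ((\<lambda>x. x ^ k * \<Delta> n x) has_integral (if k = n then 1 else 0)) {-1<..<1}"
  then show False
    by (intro no_delta_function_second_moment[of "\<Delta> 2" "\<Delta> 2 0"]) auto
qed

end
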